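(* Let $n\ge1$, $m=2^n$, and let $\mathcal{B}$ be a nontrivial boolean algebra. The number of ordered pairs $(A_1,A_2)$ of subsets of $\{0,1\}^n$ such that the algebraic sets $V_{\mathcal{B}}(S_{A_1})$ and $V_{\mathcal{B}}(S_{A_2})$ are isomorphic equals $\binom{2m}{m}$. Hence the proportion of such pairs among all $4^m$ ordered pairs is $\binom{2m}{m}/4^m$, which is asymptotically equal to $\frac{1}{\sqrt{\pi m}}$ as $n\to\infty$.
   Context: Boolean algebras are in the language $\{\vee,\cdot,\bar{\ },0,1\}$. Orthogonal variables: $Z=\{z_\alpha:\alpha\in\{0,1\}^n\}$, $|Z|=m=2^n$. For $A\subseteq\{0,1\}^n$ the orthogonal system is $$S_A=\{z_\alpha=0\mid\alpha\in A\}\cup\{z_\alpha z_\beta=0\mid \alpha\ne\beta\}\cup\{\textstyle\bigvee_{\alpha}z_\alpha=1\},$$ and $V_{\mathcal{B}}(S)$ is its solution set over $\mathcal{B}$. For an algebraic set $Y$, $t\sim_Y s$ on terms iff $t(P)=s(P)$ for all $P\in Y$; the quotient is the coordinate algebra $\Gamma_{\mathcal{B}}(Y)$. Two algebraic sets are isomorphic if their coordinate algebras are isomorphic as boolean algebras. *)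

theory Defs
  imports Complex_Main "HOL-Library.Landau_Symbols" "HOL-Library.FuncSet"
begin

datatype 'v bterm = Var 'v | Join "'v bterm" "'v bterm" | Meet "'v bterm" "'v bterm"
  | Compl "'v bterm" | Zero | One

primrec eval :: "('v \<Rightarrow> 'b::boolean_algebra) \<Rightarrow> 'v bterm \<Rightarrow> 'b" where
  "eval P (Var v) = P v"
| "eval P (Join t s) = sup (eval P t) (eval P s)"
| "eval P (Meet t s) = inf (eval P t) (eval P s)"
| "eval P (Compl t) = - eval P t"
| "eval P Zero = bot"
| "eval P One = top"

primrec vars :: "'v bterm \<Rightarrow> 'v set" where
  "vars (Var v) = {v}"
| "vars (Join t s) = vars t \<union> vars s"
| "vars (Meet t s) = vars t \<union> vars s"
| "vars (Compl t) = vars t"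
| "vars Zero = {}"
| "vars One = {}"

definition cube :: "nat \<Rightarrow> bool list set" where
  "cube n = {xs. length xs = n}"

definition cube_list :: "nat \<Rightarrow> bool list list" where
  "cube_list n = List.n_lists n [False, True]"

definition terms :: "nat \<Rightarrow> bool list bterm set" where
  "terms n = {t. vars t \<subseteq> cube n}"

fun join_list :: "'v bterm list \<Rightarrow> 'v bterm" where
  "join_list [] = Zero"
| "join_list (t # ts) = Join t (join_list ts)"

definition orth_system :: "nat \<Rightarrow> bool list set \<Rightarrow> (bool list bterm \<times> bool list bterm) set" where
  "orth_system n A =
     {(Var a, Zero) | a. a \<in> A}
   \<union> {(Meet (Var a) (Var b), Zero) | a b. a \<in> cube n \<and> b \<in> cube n \<and> a \<noteq> b}
   \<union> {(join_list (map Var (cube_list n)), One)}"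

(* solution set V_B(S) in B^Z: points are functions Z \<rightarrow> B (extensional outside Z) *)
definition alg_set :: "nat \<Rightarrow> (bool list bterm \<times> bool list bterm) set
    \<Rightarrow> (bool list \<Rightarrow> 'b::boolean_algebra) set" where
  "alg_set n S = {P. P \<in> cube n \<rightarrow>\<^sub>E UNIV \<and> (\<forall>(t, s) \<in> S. eval P t = eval P s)}"

definition coord_rel :: "nat \<Rightarrow> (bool list \<Rightarrow> 'b::boolean_algebra) set
    \<Rightarrow> (bool list bterm \<times> bool list bterm) set" where
  "coord_rel n Y = {(t, s). t \<in> terms n \<and> s \<in> terms n \<and> (\<forall>P \<in> Y. eval P t = eval P s)}"

record 'a balg =
  bcarrier :: "'a set"
  bjoin :: "'a \<Rightarrow> 'a \<Rightarrow> 'a"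
  bmeet :: "'a \<Rightarrow> 'a \<Rightarrow> 'a"
  bcompl :: "'a \<Rightarrow> 'a"
  bzero :: 'a
  bone :: 'a

definition coord_alg :: "nat \<Rightarrow> (bool list \<Rightarrow> 'b::boolean_algebra) set
    \<Rightarrow> bool list bterm set balg" where
  "coord_alg n Y =
     (let R = coord_rel n Y; rep = (\<lambda>X. SOME t. t \<in> X) in
      \<lparr> bcarrier = terms n // R,
        bjoin = (\<lambda>X X'. R `` {Join (rep X) (rep X')}),
        bmeet = (\<lambda>X X'. R `` {Meet (rep X) (rep X')}),
        bcompl = (\<lambda>X. R `` {Compl (rep X)}),
        bzero = R `` {Zero},
        bone = R `` {One} \<rparr>)"

definition balg_iso :: "'a balg \<Rightarrow> 'c balg \<Rightarrow> bool" where
  "balg_iso A B \<longleftrightarrow> (\<exists>h. bij_betw h (bcarrier A) (bcarrier B)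
     \<and> (\<forall>x \<in> bcarrier A. \<forall>y \<in> bcarrier A.
          h (bjoin A x y) = bjoin B (h x) (h y) \<and> h (bmeet A x y) = bmeet B (h x) (h y))
     \<and> (\<forall>x \<in> bcarrier A. h (bcompl A x) = bcompl B (h x))
     \<and> h (bzero A) = bzero B \<and> h (bone A) = bone B)"

definition alg_sets_iso :: "nat \<Rightarrow> (bool list \<Rightarrow> 'b::boolean_algebra) set
    \<Rightarrow> (bool list \<Rightarrow> 'b) set \<Rightarrow> bool" where
  "alg_sets_iso n Y1 Y2 \<longleftrightarrow> balg_iso (coord_alg n Y1) (coord_alg n Y2)"

definition iso_pairs :: "'b::boolean_algebra itself \<Rightarrow> nat \<Rightarrow> (bool list set \<times> bool list set) set" where
  "iso_pairs TYPE('b) n = {(A1, A2). A1 \<subseteq> cube n \<and> A2 \<subseteq> cube n \<and>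
      alg_sets_iso n (alg_set n (orth_system n A1) :: (bool list \<Rightarrow> 'b) set)
                     (alg_set n (orth_system n A2))}"

end

theory Submission
  imports Defs "HOL-Analysis.Gamma_Function"
begin

text \<open>A point of \<open>V(S_A)\<close> splits \<open>1\<close> into pairwise orthogonal atoms \<open>P z\<^sub>\<alpha>\<close>, with
  \<open>P z\<^sub>\<alpha> = 0\<close> for \<open>\<alpha> \<in> A\<close>. Below each atom a term is either \<open>0\<close> or the whole atom, as
  decided by its value at the \<open>{0,1}\<close>-valued point \<open>z\<^sub>\<alpha> = 1\<close>, \<open>z\<^sub>\<beta> = 0\<close>; so over a
  nontrivial \<open>\<B>\<close> two terms agree on \<open>V(S_A)\<close> iff they have the same set of such \<open>\<alpha> \<notin> A\<close>,
  and the coordinate algebra is the power set of \<open>{0,1}\<^sup>n - A\<close>, with \<open>2\<^bsup>m - |A|\<^esup>\<close>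
  elements. Thus isomorphism forces \<open>|A\<^sub>1| = |A\<^sub>2|\<close>, and conversely a permutation of the
  variables carrying one complement onto the other induces an isomorphism. The isomorphic pairs
  are counted by \<open>\<Sum>\<^sub>k (m choose k)\<^sup>2 = (2m choose m)\<close>, and
  \<open>(2m choose m) / 4\<^sup>m = (m - 1/2 choose m) \<sim> 1 / \<surd>(\<pi> m)\<close> by the asymptotics of
  generalised binomial coefficients, since \<open>\<Gamma>(1/2) = \<surd>\<pi>\<close>.\<close>

lemma vars_eq_set_bterm: "vars t = set_bterm t"
  by (induction t) auto

lemma eval_cong: "(\<And>v. v \<in> vars t \<Longrightarrow> P v = Q v) \<Longrightarrow> eval P t = eval Q t"
  by (induction t) auto

lemma eval_map_bterm: "eval P (map_bterm f t) = eval (P \<circ> f) t"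
  by (induction t) auto

lemma eval_of_bool:
  "eval (\<lambda>v. if P v then top else bot) t = (if eval P t then top else (bot :: 'b::boolean_algebra))"
  by (induction t) auto

lemma vars_join_list: "vars (join_list (map Var xs)) = set xs"
  by (induction xs) auto

lemma eval_join_list_bool: "eval P (join_list (map Var xs)) \<longleftrightarrow> (\<exists>a \<in> set xs. P a)"
  by (induction xs) auto

lemma inf_eval_join_list_cong:
  assumes "\<And>a. a \<in> set xs \<Longrightarrow> inf x (P a) = inf y (P a)"
  shows "inf x (eval P (join_list (map Var xs))) = inf y (eval P (join_list (map Var xs)))"
  using assms by (induction xs) (auto simp: inf_sup_distrib1)

lemma set_cube_list: "set (cube_list n) = cube n"
  unfolding cube_list_def cube_def by (auto simp: set_n_lists)

lemma card_cube: "card (cube n) = 2 ^ n"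
  using card_lists_length_eq[of "UNIV :: bool set" n] by (simp add: cube_def)

lemma finite_cube: "finite (cube n)"
  using card_cube[of n] card.infinite by fastforce

lemma join_cube_in_terms: "join_list (map Var (cube_list n)) \<in> terms n"
  by (simp add: terms_def vars_join_list set_cube_list)

lemma map_bterm_in_terms: "t \<in> terms n \<Longrightarrow> f ` cube n \<subseteq> cube n \<Longrightarrow> map_bterm f t \<in> terms n"
  by (auto simp: terms_def vars_eq_set_bterm bterm.set_map)

lemma
  assumes "P \<in> alg_set n (orth_system n A)"
  shows alg_set_orth_system_zero: "a \<in> A \<Longrightarrow> P a = bot"
    and alg_set_orth_system_orth:
      "a \<in> cube n \<Longrightarrow> b \<in> cube n \<Longrightarrow> a \<noteq> b \<Longrightarrow> inf (P a) (P b) = bot"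
    and alg_set_orth_system_join: "eval P (join_list (map Var (cube_list n))) = top"
proof -
  have sol: "eval P t = eval P s" if "(t, s) \<in> orth_system n A" for t s
    using assms that by (auto simp: alg_set_def)
  show "a \<in> A \<Longrightarrow> P a = bot"
    using sol[of "Var a" Zero] by (simp add: orth_system_def)
  show "a \<in> cube n \<Longrightarrow> b \<in> cube n \<Longrightarrow> a \<noteq> b \<Longrightarrow> inf (P a) (P b) = bot"
    using sol[of "Meet (Var a) (Var b)" Zero] by (simp add: orth_system_def)
  show "eval P (join_list (map Var (cube_list n))) = top"
    using sol[of "join_list (map Var (cube_list n))" bterm.One] by (simp add: orth_system_def)
qed

lemma alg_set_orth_systemI:
  assumes "P \<in> cube n \<rightarrow>\<^sub>E UNIV" "\<And>a. a \<in> A \<Longrightarrow> P a = bot"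
    "\<And>a b. a \<in> cube n \<Longrightarrow> b \<in> cube n \<Longrightarrow> a \<noteq> b \<Longrightarrow> inf (P a) (P b) = bot"
    "eval P (join_list (map Var (cube_list n))) = top"
  shows "P \<in> alg_set n (orth_system n A)"
  using assms unfolding alg_set_def orth_system_def by auto

definition basic_point :: "nat \<Rightarrow> bool list \<Rightarrow> bool list \<Rightarrow> 'b::boolean_algebra" where
  "basic_point n \<alpha> = (\<lambda>a. if a \<in> cube n then if a = \<alpha> then top else bot else undefined)"

text \<open>Use it as a simplification rule only at a fixed \<open>'b\<close>: at \<open>'b = bool\<close> its right-hand
  side contains an instance of its left-hand side, and the simplifier loops.\<close>

lemma eval_basic_point:
  assumes "t \<in> terms n"
  shows "eval (basic_point n \<alpha> :: bool list \<Rightarrow> 'b::boolean_algebra) t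
       = (if eval (basic_point n \<alpha>) t then top else bot)"
proof -
  have "eval (basic_point n \<alpha> :: bool list \<Rightarrow> 'b) t
      = eval (\<lambda>v. if basic_point n \<alpha> v then top else bot) t"
    using assms by (intro eval_cong) (auto simp: terms_def basic_point_def)
  then show ?thesis by (simp only: eval_of_bool)
qed

lemma basic_point_in_alg_set:
  assumes "A \<subseteq> cube n" "\<alpha> \<in> cube n - A"
  shows "(basic_point n \<alpha> :: bool list \<Rightarrow> 'b::boolean_algebra) \<in> alg_set n (orth_system n A)"
proof -
  have "eval (basic_point n \<alpha>) (join_list (map Var (cube_list n)))"
    using assms by (auto simp: eval_join_list_bool set_cube_list basic_point_def)
  then have "eval (basic_point n \<alpha> :: bool list \<Rightarrow> 'b) (join_list (map Var (cube_list n))) = top"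
    by (simp add: eval_basic_point[OF join_cube_in_terms, where 'b = 'b])
  moreover have "(basic_point n \<alpha> :: bool list \<Rightarrow> 'b) \<in> cube n \<rightarrow>\<^sub>E UNIV"
    by (simp add: basic_point_def PiE_def extensional_def)
  ultimately show ?thesis
    using assms by (intro alg_set_orth_systemI) (auto simp: basic_point_def)
qed

lemma inf_compl_if:
  "inf p x = (if b then p else bot) \<Longrightarrow> inf p (- x) = (if b then bot else p :: 'a::boolean_algebra)"
  by (metis inf_compl_bot_left1 inf_commute inf_absorb1 inf_shunt)

lemma inf_eval_orth_point:
  assumes P: "P \<in> alg_set n (orth_system n A)" and \<alpha>: "\<alpha> \<in> cube n"
  shows "vars t \<subseteq> cube n \<Longrightarrow>
    inf (P \<alpha>) (eval P t) = (if eval (basic_point n \<alpha>) t then P \<alpha> else bot)"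
proof (induction t)
  case (Var v)
  then show ?case
    using \<alpha> alg_set_orth_system_orth[OF P \<alpha>, of v] by (auto simp: basic_point_def)
next
  case (Join t s)
  then show ?case by (simp add: inf_sup_distrib1)
next
  case (Meet t s)
  have "inf (P \<alpha>) (inf x y) = inf (inf (P \<alpha>) x) (inf (P \<alpha>) y)" for x y
    by (metis inf.assoc inf.left_commute inf.left_idem)
  with Meet show ?case by simp
next
  case (Compl t)
  then show ?case by (simp add: inf_compl_if)
qed simp_all

lemma eq_if_inf_atoms_eq:
  assumes P: "P \<in> alg_set n (orth_system n A)"
    and eq: "\<And>\<alpha>. \<alpha> \<in> cube n \<Longrightarrow> inf x (P \<alpha>) = inf y (P \<alpha>)"
  shows "x = y"
  using inf_eval_join_list_cong[of "cube_list n" x P y] eq alg_set_orth_system_join[OF P]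
  by (simp add: set_cube_list)

text \<open>Here \<open>basic_point\<close> is taken at type \<open>bool\<close>: the support of \<open>t\<close> is the set of atoms
  \<open>\<alpha> \<notin> A\<close> at which the truth table of \<open>t\<close> is true.\<close>

definition atom_support :: "nat \<Rightarrow> bool list set \<Rightarrow> bool list bterm \<Rightarrow> bool list set" where
  "atom_support n A t = {\<alpha> \<in> cube n - A. eval (basic_point n \<alpha>) t}"

lemma coord_rel_orth_system:
  assumes nontriv: "(bot :: 'b::boolean_algebra) \<noteq> top" and A: "A \<subseteq> cube n"
  shows "coord_rel n (alg_set n (orth_system n A) :: (bool list \<Rightarrow> 'b) set)
     = {(t, s). t \<in> terms n \<and> s \<in> terms n \<and> atom_support n A t = atom_support n A s}"
proof (intro set_eqI iffI; clarify)
  fix t s assume "(t, s) \<in> coord_rel n (alg_set n (orth_system n A) :: (bool list \<Rightarrow> 'b) set)"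
  then have t: "t \<in> terms n" and s: "s \<in> terms n"
    and eq: "\<And>P. P \<in> (alg_set n (orth_system n A) :: (bool list \<Rightarrow> 'b) set) \<Longrightarrow> eval P t = eval P s"
    by (auto simp: coord_rel_def)
  have "eval (basic_point n \<alpha>) t \<longleftrightarrow> eval (basic_point n \<alpha>) s" if "\<alpha> \<in> cube n - A" for \<alpha>
    using eq[OF basic_point_in_alg_set[OF A that]] nontriv
    by (auto simp: eval_basic_point[OF t, where 'b = 'b] eval_basic_point[OF s, where 'b = 'b]
        split: if_splits)
  with t s show "t \<in> terms n \<and> s \<in> terms n \<and> atom_support n A t = atom_support n A s"
    by (auto simp: atom_support_def)
next
  fix t s assume t: "t \<in> terms n" and s: "s \<in> terms n"
    and supp: "atom_support n A t = atom_support n A s"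
  have "eval P t = eval P s" if P: "P \<in> (alg_set n (orth_system n A) :: (bool list \<Rightarrow> 'b) set)" for P
  proof (rule eq_if_inf_atoms_eq[OF P])
    fix \<alpha> assume \<alpha>: "\<alpha> \<in> cube n"
    show "inf (eval P t) (P \<alpha>) = inf (eval P s) (P \<alpha>)"
    proof (cases "\<alpha> \<in> A")
      case True
      then show ?thesis using alg_set_orth_system_zero[OF P] by simp
    next
      case False
      then have "eval (basic_point n \<alpha>) t \<longleftrightarrow> eval (basic_point n \<alpha>) s"
        using supp \<alpha> by (auto simp: atom_support_def)
      then show ?thesis
        using inf_eval_orth_point[OF P \<alpha>] t s by (simp add: terms_def inf_commute)
    qed
  qed
  with t s show "(t, s) \<in> coord_rel n (alg_set n (orth_system n A) :: (bool list \<Rightarrow> 'b) set)"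
    by (simp add: coord_rel_def)
qed

lemma atom_support_image: "atom_support n A ` terms n = Pow (cube n - A)"
proof
  show "atom_support n A ` terms n \<subseteq> Pow (cube n - A)"
    by (auto simp: atom_support_def)
next
  show "Pow (cube n - A) \<subseteq> atom_support n A ` terms n"
  proof
    fix S assume S: "S \<in> Pow (cube n - A)"
    then obtain xs where xs: "set xs = S"
      using finite_cube finite_list by (metis PowD finite_Diff finite_subset)
    let ?t = "join_list (map Var xs)"
    have "?t \<in> terms n"
      using xs S by (auto simp: terms_def vars_join_list)
    moreover have "atom_support n A ?t = S"
      using xs S by (auto simp: atom_support_def eval_join_list_bool basic_point_def)
    ultimately show "S \<in> atom_support n A ` terms n" by blast
  qed
qed

lemma card_quotient_kernel:
  "card (T // {(t, s). t \<in> T \<and> s \<in> T \<and> g t = g s}) = card (g ` T)"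
proof -
  let ?R = "{(t, s). t \<in> T \<and> s \<in> T \<and> g t = g s}"
  have "T // ?R = (\<lambda>t. ?R `` {t}) ` T"
    unfolding quotient_def by auto
  also have "\<dots> = (\<lambda>t. {s \<in> T. g s = g t}) ` T"
    by (rule image_cong) auto
  also have "\<dots> = (\<lambda>v. {s \<in> T. g s = v}) ` g ` T"
    by (simp add: image_image)
  finally have "T // ?R = (\<lambda>v. {s \<in> T. g s = v}) ` g ` T" .
  moreover have "inj_on (\<lambda>v. {s \<in> T. g s = v}) (g ` T)"
    by (rule inj_onI) blast
  ultimately show ?thesis by (simp add: card_image)
qed

lemma bcarrier_coord_alg: "bcarrier (coord_alg n Y) = terms n // coord_rel n Y"
  by (simp add: coord_alg_def Let_def)

lemma card_coord_alg_orth_system: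
  assumes "(bot :: 'b::boolean_algebra) \<noteq> top" and A: "A \<subseteq> cube n"
  shows "card (bcarrier (coord_alg n (alg_set n (orth_system n A) :: (bool list \<Rightarrow> 'b) set)))
       = 2 ^ (2 ^ n - card A)"
proof -
  have "card (Pow (cube n - A)) = 2 ^ (2 ^ n - card A)"
    using A finite_cube by (simp add: card_Pow card_Diff_subset finite_subset card_cube)
  then show ?thesis
    by (simp add: bcarrier_coord_alg coord_rel_orth_system[OF assms] card_quotient_kernel
        atom_support_image)
qed

lemma equiv_coord_rel: "equiv (terms n) (coord_rel n Y)"
  by (rule equivI) (auto simp: coord_rel_def refl_on_def sym_def trans_def)

lemma coord_alg_ops:
  assumes a: "a \<in> terms n" and b: "b \<in> terms n"
  shows "bjoin (coord_alg n Y) (coord_rel n Y `` {a}) (coord_rel n Y `` {b}) = coord_rel n Y `` {Join a b}"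
    and "bmeet (coord_alg n Y) (coord_rel n Y `` {a}) (coord_rel n Y `` {b}) = coord_rel n Y `` {Meet a b}"
    and "bcompl (coord_alg n Y) (coord_rel n Y `` {a}) = coord_rel n Y `` {Compl a}"
proof -
  let ?R = "coord_rel n Y"
  let ?rep = "\<lambda>X. SOME u. u \<in> X"
  have rep: "(t, ?rep (?R `` {t})) \<in> ?R" if "t \<in> terms n" for t
  proof -
    have "t \<in> ?R `` {t}"
      using that by (simp add: coord_rel_def)
    then show ?thesis by (metis someI Image_singleton_iff)
  qed
  have "(Join (?rep (?R `` {a})) (?rep (?R `` {b})), Join a b) \<in> ?R"
    and "(Meet (?rep (?R `` {a})) (?rep (?R `` {b})), Meet a b) \<in> ?R"
    and "(Compl (?rep (?R `` {a})), Compl a) \<in> ?R"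
    using rep[OF a] rep[OF b] by (auto simp: coord_rel_def terms_def)
  then have "?R `` {Join (?rep (?R `` {a})) (?rep (?R `` {b}))} = ?R `` {Join a b}"
    and "?R `` {Meet (?rep (?R `` {a})) (?rep (?R `` {b}))} = ?R `` {Meet a b}"
    and "?R `` {Compl (?rep (?R `` {a}))} = ?R `` {Compl a}"
    by (simp_all add: equiv_class_eq[OF equiv_coord_rel])
  then show "bjoin (coord_alg n Y) (?R `` {a}) (?R `` {b}) = ?R `` {Join a b}"
    and "bmeet (coord_alg n Y) (?R `` {a}) (?R `` {b}) = ?R `` {Meet a b}"
    and "bcompl (coord_alg n Y) (?R `` {a}) = ?R `` {Compl a}"
    by (simp_all add: coord_alg_def Let_def)
qed

lemma image_coord_rel_class:
  assumes "S \<subseteq> coord_rel n Y `` {x}" "x \<in> S"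
  shows "coord_rel n Y `` S = coord_rel n Y `` {x}"
proof -
  have "trans (coord_rel n Y)"
    using equiv_coord_rel[of n Y] by (simp add: equiv_def)
  with assms show ?thesis
    unfolding trans_def by blast
qed

lemma map_bterm_surj_on_terms:
  assumes \<sigma>: "bij_betw \<sigma> (cube n) (cube n)" and s: "s \<in> terms n"
  shows "\<exists>t \<in> terms n. map_bterm \<sigma> t = s"
proof
  let ?\<tau> = "inv_into (cube n) \<sigma>"
  have "?\<tau> ` cube n \<subseteq> cube n"
    using \<sigma> by (simp add: bij_betw_def inv_into_into image_subsetI)
  with s show "map_bterm ?\<tau> s \<in> terms n"
    by (rule map_bterm_in_terms)
  have "map_bterm \<sigma> (map_bterm ?\<tau> s) = map_bterm id s"
    unfolding bterm.map_comp using s \<sigma>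
    by (intro bterm.map_cong0) (auto simp: terms_def vars_eq_set_bterm bij_betw_def f_inv_into_f)
  then show "map_bterm \<sigma> (map_bterm ?\<tau> s) = s"
    by (simp add: bterm.map_id)
qed

text \<open>Saturating the image of a whole class avoids choosing a representative.\<close>

definition renamed_class :: "nat \<Rightarrow> (bool list \<Rightarrow> 'b::boolean_algebra) set \<Rightarrow> (bool list \<Rightarrow> bool list)
    \<Rightarrow> bool list bterm set \<Rightarrow> bool list bterm set" where
  "renamed_class n Y \<sigma> X = coord_rel n Y `` (map_bterm \<sigma> ` X)"

context
  fixes n :: nat and \<sigma> :: "bool list \<Rightarrow> bool list"
    and Y1 :: "(bool list \<Rightarrow> 'b::boolean_algebra) set" and Y2 :: "(bool list \<Rightarrow> 'c::boolean_algebra) set"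
  assumes \<sigma>: "bij_betw \<sigma> (cube n) (cube n)"
    and transfer: "\<And>t s. t \<in> terms n \<Longrightarrow> s \<in> terms n \<Longrightarrow>
      (t, s) \<in> coord_rel n Y1 \<longleftrightarrow> (map_bterm \<sigma> t, map_bterm \<sigma> s) \<in> coord_rel n Y2"
begin

lemma map_bterm_renaming_in_terms: "t \<in> terms n \<Longrightarrow> map_bterm \<sigma> t \<in> terms n"
  using \<sigma> by (intro map_bterm_in_terms) (auto simp: bij_betw_def)

lemma renamed_class_singleton:
  assumes t: "t \<in> terms n"
  shows "renamed_class n Y2 \<sigma> (coord_rel n Y1 `` {t}) = coord_rel n Y2 `` {map_bterm \<sigma> t}"
proof -
  have "map_bterm \<sigma> ` (coord_rel n Y1 `` {t}) \<subseteq> coord_rel n Y2 `` {map_bterm \<sigma> t}"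
    using transfer t by (auto simp: coord_rel_def)
  moreover have "map_bterm \<sigma> t \<in> map_bterm \<sigma> ` (coord_rel n Y1 `` {t})"
    using t by (auto simp: coord_rel_def)
  ultimately show ?thesis
    unfolding renamed_class_def by (rule image_coord_rel_class)
qed

lemma bij_betw_renamed_class:
  "bij_betw (renamed_class n Y2 \<sigma>) (terms n // coord_rel n Y1) (terms n // coord_rel n Y2)"
proof (rule bij_betw_imageI)
  show "inj_on (renamed_class n Y2 \<sigma>) (terms n // coord_rel n Y1)"
  proof (rule inj_onI, elim quotientE)
    fix X X' t t' assume X: "X = coord_rel n Y1 `` {t}" and X': "X' = coord_rel n Y1 `` {t'}"
      and t: "t \<in> terms n" and t': "t' \<in> terms n"
      and "renamed_class n Y2 \<sigma> X = renamed_class n Y2 \<sigma> X'"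
    then have "(map_bterm \<sigma> t, map_bterm \<sigma> t') \<in> coord_rel n Y2"
      using renamed_class_singleton eq_equiv_class_iff[OF equiv_coord_rel]
        map_bterm_renaming_in_terms by metis
    then show "X = X'"
      using X X' t t' transfer equiv_class_eq[OF equiv_coord_rel] by metis
  qed
  show "renamed_class n Y2 \<sigma> ` (terms n // coord_rel n Y1) = terms n // coord_rel n Y2"
  proof
    show "renamed_class n Y2 \<sigma> ` (terms n // coord_rel n Y1) \<subseteq> terms n // coord_rel n Y2"
      using map_bterm_renaming_in_terms renamed_class_singleton
      by (auto elim!: quotientE simp: quotientI)
    show "terms n // coord_rel n Y2 \<subseteq> renamed_class n Y2 \<sigma> ` (terms n // coord_rel n Y1)"
    proof
      fix Z assume "Z \<in> terms n // coord_rel n Y2"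
      then obtain s where Z: "Z = coord_rel n Y2 `` {s}" and "s \<in> terms n"
        by (rule quotientE)
      then obtain t where t: "t \<in> terms n" and "map_bterm \<sigma> t = s"
        using map_bterm_surj_on_terms[OF \<sigma>] by blast
      then have "Z = renamed_class n Y2 \<sigma> (coord_rel n Y1 `` {t})"
        using renamed_class_singleton Z by simp
      with t show "Z \<in> renamed_class n Y2 \<sigma> ` (terms n // coord_rel n Y1)"
        by (auto intro: quotientI)
    qed
  qed
qed

lemma balg_iso_coord_alg_renaming: "balg_iso (coord_alg n Y1) (coord_alg n Y2)"
proof -
  let ?h = "renamed_class n Y2 \<sigma>"
  show ?thesis
    unfolding balg_iso_def
  proof (intro exI[of _ ?h] conjI ballI)
    show "bij_betw ?h (bcarrier (coord_alg n Y1)) (bcarrier (coord_alg n Y2))"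
      using bij_betw_renamed_class by (simp add: bcarrier_coord_alg)
  next
    fix X X' assume "X \<in> bcarrier (coord_alg n Y1)" "X' \<in> bcarrier (coord_alg n Y1)"
    then obtain t t' where X: "X = coord_rel n Y1 `` {t}" "t \<in> terms n"
      and X': "X' = coord_rel n Y1 `` {t'}" "t' \<in> terms n"
      by (auto simp: bcarrier_coord_alg elim!: quotientE)
    have "Join t t' \<in> terms n" "Meet t t' \<in> terms n"
      using X X' by (auto simp: terms_def)
    then show "?h (bjoin (coord_alg n Y1) X X') = bjoin (coord_alg n Y2) (?h X) (?h X')"
      and "?h (bmeet (coord_alg n Y1) X X') = bmeet (coord_alg n Y2) (?h X) (?h X')"
      using X X'
      by (simp_all add: coord_alg_ops renamed_class_singleton map_bterm_renaming_in_terms)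
  next
    fix X assume "X \<in> bcarrier (coord_alg n Y1)"
    then obtain t where X: "X = coord_rel n Y1 `` {t}" "t \<in> terms n"
      by (auto simp: bcarrier_coord_alg elim!: quotientE)
    have "Compl t \<in> terms n"
      using X by (auto simp: terms_def)
    then show "?h (bcompl (coord_alg n Y1) X) = bcompl (coord_alg n Y2) (?h X)"
      using X by (simp add: coord_alg_ops renamed_class_singleton map_bterm_renaming_in_terms)
  next
    have "Zero \<in> terms n" "bterm.One \<in> terms n"
      by (simp_all add: terms_def)
    then show "?h (bzero (coord_alg n Y1)) = bzero (coord_alg n Y2)"
      and "?h (bone (coord_alg n Y1)) = bone (coord_alg n Y2)"
      by (simp_all add: coord_alg_def Let_def renamed_class_singleton)
  qed
qed

end

lemma ex_bij_betw_complements: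
  assumes "finite C" "A1 \<subseteq> C" "A2 \<subseteq> C" "card A1 = card A2"
  shows "\<exists>\<sigma>. bij_betw \<sigma> C C \<and> \<sigma> ` (C - A1) = C - A2"
proof -
  have "finite A1" "finite A2" "card (C - A1) = card (C - A2)"
    using assms by (auto simp: card_Diff_subset finite_subset)
  then obtain f g where f: "bij_betw f A1 A2" and g: "bij_betw g (C - A1) (C - A2)"
    using assms finite_same_card_bij[of A1 A2] finite_same_card_bij[of "C - A1" "C - A2"]
    by (metis finite_Diff)
  define \<sigma> where "\<sigma> x = (if x \<in> A1 then f x else g x)" for x
  have "bij_betw \<sigma> A1 A2" "bij_betw \<sigma> (C - A1) (C - A2)"
    using f g by (auto simp: \<sigma>_def intro: bij_betw_cong[THEN iffD1, rotated])
  then have "bij_betw \<sigma> (A1 \<union> (C - A1)) (A2 \<union> (C - A2))"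
    by (rule bij_betw_combine) auto
  moreover have "A1 \<union> (C - A1) = C" "A2 \<union> (C - A2) = C"
    using assms by auto
  ultimately show ?thesis
    using \<open>bij_betw \<sigma> (C - A1) (C - A2)\<close> by (auto simp: bij_betw_def)
qed

lemma eval_basic_point_map_bterm:
  assumes "inj_on \<sigma> (cube n)" "\<sigma> ` cube n \<subseteq> cube n" "\<alpha> \<in> cube n" "t \<in> terms n"
  shows "eval (basic_point n (\<sigma> \<alpha>)) (map_bterm \<sigma> t) \<longleftrightarrow> eval (basic_point n \<alpha>) t"
proof -
  have "eval (basic_point n (\<sigma> \<alpha>) \<circ> \<sigma>) t \<longleftrightarrow> eval (basic_point n \<alpha>) t"
    using assms by (intro eval_cong)
      (auto simp: terms_def basic_point_def inj_on_eq_iff image_subset_iff)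
  then show ?thesis by (simp add: eval_map_bterm)
qed

lemma atom_support_map_bterm:
  assumes \<sigma>: "bij_betw \<sigma> (cube n) (cube n)" and \<sigma>A: "\<sigma> ` (cube n - A1) = cube n - A2"
    and t: "t \<in> terms n"
  shows "atom_support n A2 (map_bterm \<sigma> t) = \<sigma> ` atom_support n A1 t"
proof -
  have "inj_on \<sigma> (cube n)" "\<sigma> ` cube n \<subseteq> cube n"
    using \<sigma> by (auto simp: bij_betw_def)
  note eval_map = eval_basic_point_map_bterm[OF this _ t]
  have "atom_support n A2 (map_bterm \<sigma> t)
      = {\<beta> \<in> \<sigma> ` (cube n - A1). eval (basic_point n \<beta>) (map_bterm \<sigma> t)}"
    by (simp add: atom_support_def \<sigma>A)
  also have "\<dots> = \<sigma> ` atom_support n A1 t"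
    using eval_map by (auto simp: atom_support_def)
  finally show ?thesis .
qed

theorem alg_sets_iso_orth_system_iff:
  assumes nontriv: "(bot :: 'b::boolean_algebra) \<noteq> top"
    and A1: "A1 \<subseteq> cube n" and A2: "A2 \<subseteq> cube n"
  shows "alg_sets_iso n (alg_set n (orth_system n A1) :: (bool list \<Rightarrow> 'b) set)
           (alg_set n (orth_system n A2)) \<longleftrightarrow> card A1 = card A2"
proof
  assume "alg_sets_iso n (alg_set n (orth_system n A1) :: (bool list \<Rightarrow> 'b) set)
           (alg_set n (orth_system n A2))"
  then have "(2::nat) ^ (2 ^ n - card A1) = 2 ^ (2 ^ n - card A2)"
    unfolding alg_sets_iso_def balg_iso_def
    using card_coord_alg_orth_system[OF nontriv A1] card_coord_alg_orth_system[OF nontriv A2]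
    by (metis bij_betw_same_card)
  moreover have "card A1 \<le> 2 ^ n" "card A2 \<le> 2 ^ n"
    using card_mono[OF finite_cube A1] card_mono[OF finite_cube A2] by (simp_all add: card_cube)
  ultimately show "card A1 = card A2"
    by simp
next
  assume "card A1 = card A2"
  then obtain \<sigma> where \<sigma>: "bij_betw \<sigma> (cube n) (cube n)" and \<sigma>A: "\<sigma> ` (cube n - A1) = cube n - A2"
    using ex_bij_betw_complements[OF finite_cube A1 A2] by blast
  have inj: "inj_on \<sigma> (cube n)" and im: "\<sigma> ` cube n \<subseteq> cube n"
    using \<sigma> by (simp_all add: bij_betw_def)
  have supp: "atom_support n A1 u \<subseteq> cube n" for u
    by (auto simp: atom_support_def)
  have "atom_support n A1 t = atom_support n A1 s \<longleftrightarrow>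
      atom_support n A2 (map_bterm \<sigma> t) = atom_support n A2 (map_bterm \<sigma> s)"
    if "t \<in> terms n" "s \<in> terms n" for t s
    using that by (simp add: atom_support_map_bterm[OF \<sigma> \<sigma>A] inj_on_image_eq_iff[OF inj supp supp])
  then show "alg_sets_iso n (alg_set n (orth_system n A1) :: (bool list \<Rightarrow> 'b) set)
      (alg_set n (orth_system n A2))"
    unfolding alg_sets_iso_def
    by (intro balg_iso_coord_alg_renaming[OF \<sigma>])
      (auto simp: coord_rel_orth_system[OF nontriv A1] coord_rel_orth_system[OF nontriv A2]
        map_bterm_in_terms[OF _ im])
qed

lemma card_equicardinal_subset_pairs:
  assumes "finite C"
  shows "card {(A1, A2). A1 \<subseteq> C \<and> A2 \<subseteq> C \<and> card A1 = card A2} = (2 * card C) choose card C"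
proof -
  define S where "S k = {A. A \<subseteq> C \<and> card A = k}" for k
  have "{(A1, A2). A1 \<subseteq> C \<and> A2 \<subseteq> C \<and> card A1 = card A2} = (\<Union>k\<le>card C. S k \<times> S k)"
    using card_mono[OF assms] by (auto simp: S_def)
  moreover have finS: "finite (S k)" and "card (S k) = card C choose k" for k
    using assms n_subsets[OF assms] by (auto simp: S_def intro: finite_subset[of _ "Pow C"])
  moreover have "card (\<Union>k\<le>card C. S k \<times> S k) = (\<Sum>k\<le>card C. card (S k \<times> S k))"
    using finS by (intro card_UN_disjoint) (auto simp: S_def)
  ultimately show ?thesis
    by (simp add: card_cartesian_product power2_eq_square choose_square_sum[symmetric])
qed

lemma card_subset_pairs:
  assumes "finite C"
  shows "card {(A1, A2). A1 \<subseteq> C \<and> A2 \<subseteq> C} = 4 ^ card C"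
proof -
  have "{(A1, A2). A1 \<subseteq> C \<and> A2 \<subseteq> C} = Pow C \<times> Pow C"
    by auto
  then show ?thesis
    using assms by (simp add: card_cartesian_product card_Pow power_mult_distrib[symmetric])
qed

lemma card_iso_pairs:
  assumes "(bot :: 'b::boolean_algebra) \<noteq> top"
  shows "card (iso_pairs TYPE('b) n) = (2 * 2 ^ n) choose (2 ^ n)"
proof -
  have "iso_pairs TYPE('b) n = {(A1, A2). A1 \<subseteq> cube n \<and> A2 \<subseteq> cube n \<and> card A1 = card A2}"
    using alg_sets_iso_orth_system_iff[OF assms] by (auto simp: iso_pairs_def)
  then show ?thesis
    by (simp add: card_equicardinal_subset_pairs[OF finite_cube] card_cube)
qed

lemma central_binomial_eq_gbinomial:
  "real ((2 * m) choose m) / 4 ^ m = (-1/2 + real m) gchoose m"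
proof -
  have "real ((2 * m) choose m) = fact (2 * m) / (fact m * fact m)"
    using binomial_fact[of m "2 * m", where 'a = real] by (simp add: mult_2)
  also have "\<dots> = 4 ^ m * pochhammer (1/2) m / fact m"
    by (simp add: fact_double power_mult)
  finally show ?thesis
    by (simp add: gbinomial_pochhammer')
qed

lemma central_binomial_asymp_equiv:
  "(\<lambda>m. real ((2 * m) choose m) / 4 ^ m) \<sim>[at_top] (\<lambda>m. 1 / sqrt (pi * real m))"
proof (rule asymp_equivI')
  have "(\<lambda>m. ((-1/2 + real m) gchoose m) * exp (-(-1/2) * ln (real m))) \<longlonglongrightarrow> rGamma (1/2)"
    using Gamma_gbinomial[of "-1/2 :: real"] by simp
  then have "(\<lambda>m. ((-1/2 + real m) gchoose m) * exp (-(-1/2) * ln (real m)) * sqrt pi) \<longlonglongrightarrow> 1"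
    using tendsto_mult_right[of _ _ _ "sqrt pi"]
    by (fastforce simp: rGamma_inverse_Gamma Gamma_one_half_real)
  moreover have "\<forall>\<^sub>F m in at_top. ((-1/2 + real m) gchoose m) * exp (-(-1/2) * ln (real m)) * sqrt pi
      = real ((2 * m) choose m) / 4 ^ m / (1 / sqrt (pi * real m))"
    using eventually_gt_at_top[of "0::nat"]
    by eventually_elim
      (simp add: central_binomial_eq_gbinomial powr_half_sqrt[symmetric] powr_def real_sqrt_mult)
  ultimately show "((\<lambda>m. real ((2 * m) choose m) / 4 ^ m / (1 / sqrt (pi * real m))) \<longlongrightarrow> 1) at_top"
    by (rule Lim_transform_eventually)
qed

theorem mainTheorem6:
  assumes nontriv: "(bot :: 'b :: boolean_algebra) \<noteq> top"
  shows "(\<forall>n \<ge> 1. card (iso_pairs TYPE('b) n) = (2 * 2 ^ n) choose (2 ^ n)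
                   \<and> card {(A1, A2). A1 \<subseteq> cube n \<and> A2 \<subseteq> cube n} = 4 ^ (2 ^ n))
       \<and> ((\<lambda>n. real (card (iso_pairs TYPE('b) n)) / 4 ^ (2 ^ n))
            \<sim>[at_top] (\<lambda>n. 1 / sqrt (pi * 2 ^ n)))"
proof (intro conjI allI impI)
  show "card (iso_pairs TYPE('b) n) = (2 * 2 ^ n) choose (2 ^ n)" for n
    by (rule card_iso_pairs[OF nontriv])
  show "card {(A1, A2). A1 \<subseteq> cube n \<and> A2 \<subseteq> cube n} = 4 ^ (2 ^ n)" for n
    using card_subset_pairs[OF finite_cube, of n] by (simp add: card_cube)
  have "filterlim (\<lambda>n::nat. 2 ^ n :: nat) at_top at_top"
    by (rule filterlim_subseq) (simp add: strict_mono_def)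
  from asymp_equiv_compose'[OF central_binomial_asymp_equiv this]
  show "(\<lambda>n. real (card (iso_pairs TYPE('b) n)) / 4 ^ (2 ^ n)) \<sim>[at_top] (\<lambda>n. 1 / sqrt (pi * 2 ^ n))"
    by (simp add: card_iso_pairs[OF nontriv])
qed

end
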